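(* Let $s$ be an aggregation method which, for every finite set $\mathcal R$ of reviewers and finite set $\mathcal P$ of papers, maps each recommendation profile $(y_{ia})_{i\in\mathcal R,a\in\mathcal P}\in[0,10]^{\mathcal R\times\mathcal P}$ to a solution vector $(s_a)_{a\in\mathcal P}\in[0,10]^{\mathcal P}$. If $s$ is continuous and satisfies Consensus and Consistency, then $s$ does not satisfy Strategy-proofness.
   Context: Continuity means that for each fixed $\mathcal R,\mathcal P$ the map $(y_{ia})\mapsto(s_a)$ is continuous. Axioms (a method satisfies an axiom if the property holds for every recommendation profile): Consensus: if for a paper $a$ we have $y_{ia}=y$ for all $i\in\mathcal R$, then $s_a=y$. Paper $a$ dominates paper $b$ if there is a permutation $\pi$ of $\mathcal R$ with $y_{ia}\ge y_{\pi(i)b}$ for all $i$; it strictly dominates if at least one of these inequalities is strict. Efficiency: whenever $a$ dominates $b$, $s_a\ge s_b$. Consistency: Efficiency holds and whenever $a$ strictly dominates $b$, $s_a>s_b$. Strategy-proofness: for every profile, every reviewer $i$ and every misreported recommendation vector $(y'_{ia})_{a\in\mathcal P}$ of reviewer $i$ (all other recommendations unchanged), the resulting solution $(s'_a)_a$ satisfies $\|(s'_a)_a-(y_{ia})_a\|_2\ge\|(s_a)_a-(y_{ia})_a\|_2$, where $(y_{ia})_a$ are reviewer $i$'s true recommendations and $(s_a)_a$ the solution for the true profile. *)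

theory Defs
  imports Complex_Main
begin

text \<open>An aggregation method takes the reviewer set R,
the paper set P and a recommendation profile y (y i a = recommendation of reviewer i for paper a)
and returns the solution vector (s a for a in P).\<close>

type_synonym agg_method = "nat set \<Rightarrow> nat set \<Rightarrow> (nat \<Rightarrow> nat \<Rightarrow> real) \<Rightarrow> nat \<Rightarrow> real"

text \<open>Profiles in [0,10]^(R x P); values outside R x P are fixed to 0 (canonical representatives).\<close>
definition profiles :: "nat set \<Rightarrow> nat set \<Rightarrow> (nat \<Rightarrow> nat \<Rightarrow> real) set" where
  "profiles R P = {y. \<forall>i a. (i \<in> R \<and> a \<in> P \<longrightarrow> 0 \<le> y i a \<and> y i a \<le> 10)
                          \<and> (\<not> (i \<in> R \<and> a \<in> P) \<longrightarrow> y i a = 0)}"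

definition admissible :: "nat set \<Rightarrow> nat set \<Rightarrow> bool" where
  "admissible R P \<longleftrightarrow> finite R \<and> finite P \<and> R \<noteq> {} \<and> P \<noteq> {}"

definition valid_method :: "agg_method \<Rightarrow> bool" where
  "valid_method s \<longleftrightarrow> (\<forall>R P. admissible R P \<longrightarrow>
     (\<forall>y \<in> profiles R P. \<forall>a \<in> P. 0 \<le> s R P y a \<and> s R P y a \<le> 10))"

definition continuous_method :: "agg_method \<Rightarrow> bool" where
  "continuous_method s \<longleftrightarrow> (\<forall>R P. admissible R P \<longrightarrow>
     (\<forall>y \<in> profiles R P. \<forall>e>0. \<exists>d>0. \<forall>y' \<in> profiles R P.
        (\<forall>i\<in>R. \<forall>a\<in>P. \<bar>y' i a - y i a\<bar> < d) \<longrightarrow> (\<forall>a\<in>P. \<bar>s R P y' a - s R P y a\<bar> < e)))"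

definition consensus :: "agg_method \<Rightarrow> bool" where
  "consensus s \<longleftrightarrow> (\<forall>R P. admissible R P \<longrightarrow>
     (\<forall>y \<in> profiles R P. \<forall>a \<in> P. \<forall>c. (\<forall>i\<in>R. y i a = c) \<longrightarrow> s R P y a = c))"

definition dominates :: "nat set \<Rightarrow> (nat \<Rightarrow> nat \<Rightarrow> real) \<Rightarrow> nat \<Rightarrow> nat \<Rightarrow> bool" where
  "dominates R y a b \<longleftrightarrow> (\<exists>\<pi>. bij_betw \<pi> R R \<and> (\<forall>i\<in>R. y i a \<ge> y (\<pi> i) b))"

definition strictly_dominates :: "nat set \<Rightarrow> (nat \<Rightarrow> nat \<Rightarrow> real) \<Rightarrow> nat \<Rightarrow> nat \<Rightarrow> bool" where
  "strictly_dominates R y a b \<longleftrightarrow> (\<exists>\<pi>. bij_betw \<pi> R R \<and> (\<forall>i\<in>R. y i a \<ge> y (\<pi> i) b)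
                                       \<and> (\<exists>i\<in>R. y i a > y (\<pi> i) b))"

definition efficiency :: "agg_method \<Rightarrow> bool" where
  "efficiency s \<longleftrightarrow> (\<forall>R P. admissible R P \<longrightarrow>
     (\<forall>y \<in> profiles R P. \<forall>a\<in>P. \<forall>b\<in>P. dominates R y a b \<longrightarrow> s R P y a \<ge> s R P y b))"

definition consistency :: "agg_method \<Rightarrow> bool" where
  "consistency s \<longleftrightarrow> efficiency s \<and> (\<forall>R P. admissible R P \<longrightarrow>
     (\<forall>y \<in> profiles R P. \<forall>a\<in>P. \<forall>b\<in>P. strictly_dominates R y a b \<longrightarrow> s R P y a > s R P y b))"

definition strategy_proof :: "agg_method \<Rightarrow> bool" where
  "strategy_proof s \<longleftrightarrow> (\<forall>R P. admissible R P \<longrightarrow>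
     (\<forall>y \<in> profiles R P. \<forall>i\<in>R. \<forall>v. (\<forall>a\<in>P. 0 \<le> v a \<and> v a \<le> 10) \<longrightarrow> (\<forall>a. a \<notin> P \<longrightarrow> v a = 0) \<longrightarrow>
        sqrt (\<Sum>a\<in>P. (s R P (y(i := v)) a - y i a)^2) \<ge> sqrt (\<Sum>a\<in>P. (s R P y a - y i a)^2)))"

end

theory Submission
  imports Defs "HOL-Analysis.Elementary_Metric_Spaces"
begin

text \<open>Two reviewers 0 and 1 grade two papers. Both give \<open>t\<close> to paper 1, reviewer 1 gives 10
to paper 0 and reviewer 0 gives \<open>x\<close> to paper 0; let \<open>G x t = dissent_score s x t\<close> be the resulting
score of paper 0.
Consensus fixes the score of paper 1 at \<open>t\<close> and gives \<open>G 10 t = 10\<close>; Consistency gives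
\<open>G t t > t\<close> for \<open>t < 10\<close>. If reviewer 0's true row is \<open>(t, t)\<close>, Strategy-proofness says
that no report \<open>x\<close> brings \<open>G x t\<close> closer to \<open>t\<close> than \<open>G t t\<close>, so \<open>G x t \<noteq> t\<close> for all \<open>x\<close>;
by continuity in \<open>x\<close> and the intermediate value theorem \<open>G 0 t > t\<close> for every \<open>t < 10\<close>.
Letting \<open>t \<rightarrow> 10\<close> gives \<open>G 0 10 \<ge> 10\<close>, while Consistency gives \<open>G 0 10 < 10\<close>, since then
paper 1 strictly dominates paper 0.\<close>

lemma continuous_on_method_path:
  fixes \<gamma> :: "'a::topological_space \<Rightarrow> nat \<Rightarrow> nat \<Rightarrow> real"
  assumes s: "continuous_method s" and RP: "admissible R P"
    and \<gamma>: "\<And>u. u \<in> S \<Longrightarrow> \<gamma> u \<in> profiles R P"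
    and entries: "\<And>i a. i \<in> R \<Longrightarrow> a \<in> P \<Longrightarrow> continuous_on S (\<lambda>u. \<gamma> u i a)"
    and "b \<in> P"
  shows "continuous_on S (\<lambda>u. s R P (\<gamma> u) b)"
  unfolding continuous_on_def
proof (intro ballI tendstoI)
  fix u and e :: real
  assume "u \<in> S" "e > 0"
  then obtain d where "d > 0" and d: "\<And>y. y \<in> profiles R P \<Longrightarrow>
      (\<forall>i\<in>R. \<forall>a\<in>P. \<bar>y i a - \<gamma> u i a\<bar> < d) \<Longrightarrow> \<bar>s R P y b - s R P (\<gamma> u) b\<bar> < e"
    using s RP \<gamma> \<open>b \<in> P\<close> unfolding continuous_method_def by metis
  have "\<forall>(i, a) \<in> R \<times> P. \<forall>\<^sub>F v in at u within S. \<bar>\<gamma> v i a - \<gamma> u i a\<bar> < d"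
  proof clarify
    fix i a assume "i \<in> R" "a \<in> P"
    then have "((\<lambda>v. \<gamma> v i a) \<longlongrightarrow> \<gamma> u i a) (at u within S)"
      using entries \<open>u \<in> S\<close> by (simp add: continuous_on_def)
    from tendstoD[OF this \<open>d > 0\<close>]
    show "\<forall>\<^sub>F v in at u within S. \<bar>\<gamma> v i a - \<gamma> u i a\<bar> < d"
      by (simp add: dist_real_def)
  qed
  then have "\<forall>\<^sub>F v in at u within S. \<forall>(i, a) \<in> R \<times> P. \<bar>\<gamma> v i a - \<gamma> u i a\<bar> < d"
    using RP unfolding admissible_def by (intro eventually_ball_finite) auto
  moreover have "\<forall>\<^sub>F v in at u within S. v \<in> S"
    by (simp add: eventually_at_filter)
  ultimately show "\<forall>\<^sub>F v in at u within S. dist (s R P (\<gamma> v) b) (s R P (\<gamma> u) b) < e"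
    by eventually_elim (auto simp: dist_real_def intro!: d \<gamma>)
qed

lemma strategy_proof_sum_squares_le:
  assumes s: "strategy_proof s" and RP: "admissible R P"
    and y: "y \<in> profiles R P" and y': "y' \<in> profiles R P"
    and "i \<in> R" and others: "\<And>j. j \<noteq> i \<Longrightarrow> y' j = y j"
  shows "(\<Sum>a\<in>P. (s R P y a - y i a)\<^sup>2) \<le> (\<Sum>a\<in>P. (s R P y' a - y i a)\<^sup>2)"
proof -
  have "\<forall>a\<in>P. 0 \<le> y' i a \<and> y' i a \<le> 10" "\<forall>a. a \<notin> P \<longrightarrow> y' i a = 0"
    using y' \<open>i \<in> R\<close> by (auto simp: profiles_def)
  then have "sqrt (\<Sum>a\<in>P. (s R P y a - y i a)\<^sup>2) \<le> sqrt (\<Sum>a\<in>P. (s R P (y(i := y' i)) a - y i a)\<^sup>2)"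
    using s RP y \<open>i \<in> R\<close> unfolding strategy_proof_def by blast
  moreover have "y(i := y' i) = y'"
    using others by auto
  ultimately show ?thesis
    by simp
qed

definition dissent_profile :: "real \<Rightarrow> real \<Rightarrow> nat \<Rightarrow> nat \<Rightarrow> real" where
  "dissent_profile x t i a =
     (if i = 0 \<and> a = 0 then x else if i = 1 \<and> a = 0 then 10 else if i \<in> {0, 1} \<and> a = 1 then t else 0)"

definition dissent_score :: "agg_method \<Rightarrow> real \<Rightarrow> real \<Rightarrow> real" where
  "dissent_score s x t = s {0, 1} {0, 1} (dissent_profile x t) 0"

lemma admissible_two_two: "admissible {0, 1} {0, 1}"
  by (simp add: admissible_def)

lemma dissent_profile_in_profiles:
  "x \<in> {0..10} \<Longrightarrow> t \<in> {0..10} \<Longrightarrow> dissent_profile x t \<in> profiles {0, 1} {0, 1}"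
  by (auto simp: profiles_def dissent_profile_def)

lemma consensus_dissent_profile_paper1:
  assumes "consensus s" "x \<in> {0..10}" "t \<in> {0..10}"
  shows "s {0, 1} {0, 1} (dissent_profile x t) 1 = t"
  using assms admissible_two_two dissent_profile_in_profiles
  unfolding consensus_def by (simp add: dissent_profile_def)

lemma dissent_score_top:
  assumes "consensus s" "t \<in> {0..10}"
  shows "dissent_score s 10 t = 10"
  using assms admissible_two_two dissent_profile_in_profiles[of 10 t]
  unfolding consensus_def dissent_score_def by (simp add: dissent_profile_def)

lemma dissent_score_diagonal_gt:
  assumes "consensus s" "consistency s" "0 \<le> t" "t < 10"
  shows "dissent_score s t t > t"
proof -
  have "strictly_dominates {0, 1} (dissent_profile t t) 0 1"
    unfolding strictly_dominates_def
    using \<open>t < 10\<close> by (intro exI[of _ id]) (auto simp: dissent_profile_def)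
  then have "s {0, 1} {0, 1} (dissent_profile t t) 0 > s {0, 1} {0, 1} (dissent_profile t t) 1"
    using assms admissible_two_two dissent_profile_in_profiles[of t t]
    unfolding consistency_def by simp
  then show ?thesis
    using consensus_dissent_profile_paper1[of s t t] assms by (simp add: dissent_score_def)
qed

lemma dissent_score_zero_top_lt:
  assumes "consensus s" "consistency s"
  shows "dissent_score s 0 10 < 10"
proof -
  have "strictly_dominates {0, 1} (dissent_profile 0 10) 1 0"
    unfolding strictly_dominates_def
    by (intro exI[of _ id]) (auto simp: dissent_profile_def)
  then have "s {0, 1} {0, 1} (dissent_profile 0 10) 1 > s {0, 1} {0, 1} (dissent_profile 0 10) 0"
    using assms admissible_two_two dissent_profile_in_profiles[of 0 10]
    unfolding consistency_def by simp
  then show ?thesis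
    using consensus_dissent_profile_paper1[of s 0 10] assms by (simp add: dissent_score_def)
qed

lemma strategy_proof_dissent_score:
  assumes "strategy_proof s" "consensus s" "x \<in> {0..10}" "t \<in> {0..10}"
  shows "\<bar>dissent_score s t t - t\<bar> \<le> \<bar>dissent_score s x t - t\<bar>"
proof -
  have "dissent_profile x t j = dissent_profile t t j" if "j \<noteq> 0" for j
    using that by (auto simp: dissent_profile_def)
  then have "(\<Sum>a\<in>{0, 1}. (s {0, 1} {0, 1} (dissent_profile t t) a - dissent_profile t t 0 a)\<^sup>2)
      \<le> (\<Sum>a\<in>{0, 1}. (s {0, 1} {0, 1} (dissent_profile x t) a - dissent_profile t t 0 a)\<^sup>2)"
    using assms by (intro strategy_proof_sum_squares_le[OF assms(1) admissible_two_two
        dissent_profile_in_profiles dissent_profile_in_profiles]) auto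
  then have "(dissent_score s t t - t)\<^sup>2 \<le> (dissent_score s x t - t)\<^sup>2"
    using assms consensus_dissent_profile_paper1[of s] by (simp add: dissent_score_def dissent_profile_def)
  then show ?thesis
    using abs_le_square_iff by blast
qed

lemma continuous_on_dissent_score:
  assumes s: "continuous_method s"
    and "continuous_on S f" "continuous_on S g"
    and "\<And>u. u \<in> S \<Longrightarrow> f u \<in> {0..10}" "\<And>u. u \<in> S \<Longrightarrow> g u \<in> {0..10}"
  shows "continuous_on S (\<lambda>u. dissent_score s (f u) (g u))"
  unfolding dissent_score_def
proof (rule continuous_on_method_path[OF s admissible_two_two])
  show "\<And>u. u \<in> S \<Longrightarrow> dissent_profile (f u) (g u) \<in> profiles {0, 1} {0, 1}"
    using assms by (blast intro: dissent_profile_in_profiles)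
  show "continuous_on S (\<lambda>u. dissent_profile (f u) (g u) i a)" for i a
    by (cases "i = 0"; cases "i = 1"; cases "a = 0"; cases "a = 1")
      (simp_all add: dissent_profile_def assms(2,3))
qed simp

lemma dissent_score_zero_gt:
  assumes sp: "strategy_proof s" and cont: "continuous_method s"
    and cons: "consensus s" "consistency s" and t: "0 \<le> t" "t < 10"
  shows "dissent_score s 0 t > t"
proof (rule ccontr)
  assume "\<not> dissent_score s 0 t > t"
  moreover have "t \<le> dissent_score s 10 t"
    using dissent_score_top[OF cons(1)] t by simp
  moreover have "continuous_on {0..10} (\<lambda>x. dissent_score s x t)"
    using t by (intro continuous_on_dissent_score[OF cont continuous_on_id continuous_on_const]) auto
  ultimately obtain x where "x \<in> {0..10}" "dissent_score s x t = t"
    using IVT'[of "\<lambda>x. dissent_score s x t" 0 t 10] by auto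
  then have "\<bar>dissent_score s t t - t\<bar> \<le> 0"
    using strategy_proof_dissent_score[OF sp cons(1), of x t] t by simp
  then show False
    using dissent_score_diagonal_gt[OF cons t] by simp
qed

theorem proposition3p2:
  fixes s :: agg_method
  assumes "valid_method s"
    and "continuous_method s"
    and "consensus s"
    and "consistency s"
  shows "\<not> strategy_proof s"
proof
  assume "strategy_proof s"
  have "continuous_on {0..10} (\<lambda>t. dissent_score s 0 t - t)"
    by (intro continuous_on_diff continuous_on_id
        continuous_on_dissent_score[OF assms(2) continuous_on_const continuous_on_id]) auto
  moreover have "dissent_score s 0 t - t \<ge> 0" if "t \<in> {0..<10}" for t
    using dissent_score_zero_gt[OF \<open>strategy_proof s\<close> assms(2-4), of t] that by simp
  ultimately have "dissent_score s 0 10 - 10 \<ge> 0"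
    using continuous_ge_on_closure[where S = "{0..<10}" and x = 10 and a = 0
        and f = "\<lambda>t. dissent_score s 0 t - t"] by simp
  then show False
    using dissent_score_zero_top_lt[OF assms(3,4)] by simp
qed

end
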